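(* Let $n_1,n_2,n_3$ be integers with $3\le n_1,n_2\le n_3$ and $3\max(n_1,n_2)\le 2n_3\le n_1n_2$. Every set $W$ produced by the Middle Cone Construction described below is a basic landmark system for $K(\mathbf{n})$.
   Context: $K(\mathbf{n})=K_{n_1}\times K_{n_2}\times K_{n_3}$: vertices are triples $(x_1,x_2,x_3)$, $1\le x_i\le n_i$, adjacent iff they differ in every coordinate. For a vertex set $W$, $W_{i,a}=\{w\in W:w_i=a\}$. Basic landmark system: $W$ such that (1) $W_{i,a}\neq\emptyset$ for all $i\in\{1,2,3\}$, $1\le a\le n_i$; (2) $|W_{i,a}|\ge2$ for all such $i,a$; (3) $|W_{i,a}\cap W_{j,b}|\le1$ whenever $i\ne j$. Multiplicities: write $n_3=qn_1+r$, $0\le r\le n_1-1$. If $r\le n_1-r$, $(\ell_1,\dots,\ell_{n_1})$ is $(q+1,q)$ repeated $r$ times followed by $n_1-2r$ copies of $q$; if $r>n_1-r$, it is $(q+1,q)$ repeated $n_1-r$ times followed by $2r-n_1$ copies of $q+1$. Let $L_i=\sum_{j<i}\ell_j$, so block $i$ consists of columns $c$ with $L_i<c\le L_i+\ell_i$; $s_i=L_i+1$. Middle Cone Construction: $W=W^L\cup W^R$, each consisting of $n_3$ landmarks indexed by columns $c=1,\dots,n_3$. Left column $c$ in block $i$ is $(i,y^L_c,c)$; right column $c$ in block $i$ is $(i+1,y^R_c,c)$ with $n_1+1$ read as $1$. Even $n_2$, $h=n_2/2$: $y^L_c=((c-1)\bmod h)+1$, $y^R_c=h+((c-1)\bmod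 h)+1$. Odd $n_2$, $f=(n_2-1)/2$, $k=\#\{i:\ell_i>f\}$: let $S=\{s_i:\ell_i>f\}$ if $k\ge2$ and $S=\{1\}$ if $k\le1$. Set $y^L_c=n_2$ for $c\in S$ and fill the other left columns in increasing order with $1,\dots,f,1,\dots,f,\dots$; set $y^R_c=n_2$ for $c\in S+1$ and fill the other right columns in increasing order with $f+1,\dots,2f,f+1,\dots,2f,\dots$. If $k\le1$, additionally change one left landmark of the form $(x,1,z)$ with $x\notin\{1,2,n_1\}$ to $(x,n_2,z)$ (any such choice). *)

theory Defs
  imports Main
begin

text \<open>Vertices of K(n1,n2,n3) are triples of naturals (x1,x2,x3) with 1 \<le> xi \<le> ni.\<close>
type_synonym vert = "nat \<times> nat \<times> nat"

definition coord :: "nat \<Rightarrow> vert \<Rightarrow> nat" where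
  "coord i v = (case v of (x1, x2, x3) \<Rightarrow> if i = 1 then x1 else if i = 2 then x2 else x3)"

definition dimn :: "nat \<Rightarrow> nat \<Rightarrow> nat \<Rightarrow> nat \<Rightarrow> nat" where
  "dimn n1 n2 n3 i = (if i = 1 then n1 else if i = 2 then n2 else n3)"

definition vertices :: "nat \<Rightarrow> nat \<Rightarrow> nat \<Rightarrow> vert set" where
  "vertices n1 n2 n3 = {1..n1} \<times> {1..n2} \<times> {1..n3}"

definition slice :: "vert set \<Rightarrow> nat \<Rightarrow> nat \<Rightarrow> vert set" where
  "slice W i a = {w \<in> W. coord i w = a}"

definition basic_landmark_system :: "nat \<Rightarrow> nat \<Rightarrow> nat \<Rightarrow> vert set \<Rightarrow> bool" where
  "basic_landmark_system n1 n2 n3 W \<longleftrightarrow>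
     W \<subseteq> vertices n1 n2 n3 \<and>
     (\<forall>i\<in>{1,2,3}. \<forall>a\<in>{1..dimn n1 n2 n3 i}. slice W i a \<noteq> {}) \<and>
     (\<forall>i\<in>{1,2,3}. \<forall>a\<in>{1..dimn n1 n2 n3 i}. card (slice W i a) \<ge> 2) \<and>
     (\<forall>i\<in>{1,2,3}. \<forall>j\<in>{1,2,3}. \<forall>a\<in>{1..dimn n1 n2 n3 i}. \<forall>b\<in>{1..dimn n1 n2 n3 j}.
        i \<noteq> j \<longrightarrow> card (slice W i a \<inter> slice W j b) \<le> 1)"

definition ell :: "nat \<Rightarrow> nat \<Rightarrow> nat \<Rightarrow> nat" where
  "ell n1 n3 i = (let q = n3 div n1; r = n3 mod n1 in
     if r \<le> n1 - r then (if odd i \<and> i \<le> 2 * r then q + 1 else q)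
     else (if i \<le> 2 * (n1 - r) then (if odd i then q + 1 else q) else q + 1))"

definition Lsum :: "nat \<Rightarrow> nat \<Rightarrow> nat \<Rightarrow> nat" where
  "Lsum n1 n3 i = (\<Sum>j\<in>{1..<i}. ell n1 n3 j)"

definition sblk :: "nat \<Rightarrow> nat \<Rightarrow> nat \<Rightarrow> nat" where
  "sblk n1 n3 i = Lsum n1 n3 i + 1"

definition blk :: "nat \<Rightarrow> nat \<Rightarrow> nat \<Rightarrow> nat" where
  "blk n1 n3 c = (THE i. i \<in> {1..n1} \<and> Lsum n1 n3 i < c \<and> c \<le> Lsum n1 n3 i + ell n1 n3 i)"

definition WLeft :: "nat \<Rightarrow> nat \<Rightarrow> (nat \<Rightarrow> nat) \<Rightarrow> vert set" where
  "WLeft n1 n3 y = {(blk n1 n3 c, y c, c) | c. c \<in> {1..n3}}"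

definition WRight :: "nat \<Rightarrow> nat \<Rightarrow> (nat \<Rightarrow> nat) \<Rightarrow> vert set" where
  "WRight n1 n3 y = {(blk n1 n3 c mod n1 + 1, y c, c) | c. c \<in> {1..n3}}"

definition yL_even :: "nat \<Rightarrow> nat \<Rightarrow> nat" where
  "yL_even n2 c = ((c - 1) mod (n2 div 2)) + 1"

definition yR_even :: "nat \<Rightarrow> nat \<Rightarrow> nat" where
  "yR_even n2 c = n2 div 2 + ((c - 1) mod (n2 div 2)) + 1"

definition fpar :: "nat \<Rightarrow> nat" where
  "fpar n2 = (n2 - 1) div 2"

definition bigblocks :: "nat \<Rightarrow> nat \<Rightarrow> nat \<Rightarrow> nat set" where
  "bigblocks n1 n2 n3 = {i \<in> {1..n1}. ell n1 n3 i > fpar n2}"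

definition kpar :: "nat \<Rightarrow> nat \<Rightarrow> nat \<Rightarrow> nat" where
  "kpar n1 n2 n3 = card (bigblocks n1 n2 n3)"

definition Sset :: "nat \<Rightarrow> nat \<Rightarrow> nat \<Rightarrow> nat set" where
  "Sset n1 n2 n3 = (if kpar n1 n2 n3 \<ge> 2 then sblk n1 n3 ` bigblocks n1 n2 n3 else {1})"

text \<open>Position (1-based) of column c among the columns 1..c not in S
  (the "increasing order" filling).\<close>
definition rank_out :: "nat set \<Rightarrow> nat \<Rightarrow> nat" where
  "rank_out S c = card {c'. 1 \<le> c' \<and> c' \<le> c \<and> c' \<notin> S}"

definition yL_odd :: "nat \<Rightarrow> nat \<Rightarrow> nat \<Rightarrow> nat \<Rightarrow> nat" where
  "yL_odd n1 n2 n3 c = (if c \<in> Sset n1 n2 n3 then n2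
     else ((rank_out (Sset n1 n2 n3) c - 1) mod fpar n2) + 1)"

definition yR_odd :: "nat \<Rightarrow> nat \<Rightarrow> nat \<Rightarrow> nat \<Rightarrow> nat" where
  "yR_odd n1 n2 n3 c = (let S1 = (\<lambda>s. s + 1) ` Sset n1 n2 n3 in
     if c \<in> S1 then n2 else fpar n2 + ((rank_out S1 c - 1) mod fpar n2) + 1)"

text \<open>W is a set produced by the Middle Cone Construction (including every admissible
  choice of the modified landmark in the case k \<le> 1).\<close>
definition middle_cone :: "nat \<Rightarrow> nat \<Rightarrow> nat \<Rightarrow> vert set \<Rightarrow> bool" where
  "middle_cone n1 n2 n3 W \<longleftrightarrow>
     (if even n2 then W = WLeft n1 n3 (yL_even n2) \<union> WRight n1 n3 (yR_even n2)
      else if kpar n1 n2 n3 \<ge> 2 then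
        W = WLeft n1 n3 (yL_odd n1 n2 n3) \<union> WRight n1 n3 (yR_odd n1 n2 n3)
      else (\<exists>c\<in>{1..n3}. yL_odd n1 n2 n3 c = 1 \<and> blk n1 n3 c \<notin> {1, 2, n1} \<and>
              W = WLeft n1 n3 ((yL_odd n1 n2 n3)(c := n2)) \<union> WRight n1 n3 (yR_odd n1 n2 n3)))"

end

theory Submission
  imports Defs
begin

text \<open>
  Each column c carries two landmarks with third coordinate c: a left one in the block of c and a
  right one in the next block, cyclically. Hence two landmarks agreeing in the third coordinate
  differ in the first one, and they differ in the second one because the left and right labels of a
  column never coincide. The left labels run cyclically through 1, ..., f and the right labels
  through f + 1, ..., 2f, where n2 = 2f or n2 = 2f + 1; in the odd case the value n2 is put on the
  first columns of some blocks on the left, on their second columns on the right, and possibly on one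
  modified column. Landmarks agreeing in the first two coordinates are then excluded for two reasons.
  Within a block the labels are injective: a block has at most f columns besides the top ones, and
  the cyclic labelling has period f. A left and a right label of adjacent blocks can only meet at
  the top value, and the blocks carrying it are never adjacent.
  The arithmetic behind this is 2 n3 \<le> n1 n2, i.e. q \<le> n2 / 2: blocks have at most f + 1 columns,
  and the blocks with f + 1 columns are odd-numbered blocks i \<le> 2r \<le> n1, hence pairwise
  non-adjacent. Finally 3 n2 \<le> 2 n3 leaves at least 3f columns outside the top ones, so every label
  value occurs at least twice, even after one column has been modified.
\<close>

lemma card_odd_atMost_double: "card {i::nat. odd i \<and> i \<le> 2 * m} = m"
proof -
  have "{i::nat. odd i \<and> i \<le> 2 * m} = (\<lambda>k. 2 * k + 1) ` {..<m}"
    by (auto elim!: oddE)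
  then show ?thesis by (simp add: card_image inj_on_def)
qed

lemma card_even_pos_atMost_double: "card {i::nat. even i \<and> 0 < i \<and> i \<le> 2 * m} = m"
proof -
  have "{i::nat. even i \<and> 0 < i \<and> i \<le> 2 * m} = (\<lambda>k. 2 * k) ` {1..m}"
    by (auto simp: image_iff elim!: evenE)
  then show ?thesis by (simp add: card_image inj_on_def)
qed

lemma rotate_in_range: "0 < n \<Longrightarrow> (x::nat) mod n + 1 \<in> {1..n}"
  by (simp add: Suc_leI)

lemma rotate_eq: "(x::nat) \<in> {1..n} \<Longrightarrow> x mod n + 1 = (if x = n then 1 else x + 1)"
  by auto

lemma rotate_neq: "2 \<le> n \<Longrightarrow> (x::nat) \<in> {1..n} \<Longrightarrow> x mod n + 1 \<noteq> x"
  by (subst rotate_eq) auto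

lemma bij_betw_rotate: "bij_betw (\<lambda>x::nat. x mod n + 1) {1..n} {1..n}"
proof (rule bij_betw_imageI)
  show "inj_on (\<lambda>x. x mod n + 1) {1..n}"
  proof (rule inj_onI)
    fix x y assume x: "x \<in> {1..n}" and y: "y \<in> {1..n}" and "x mod n + 1 = y mod n + 1"
    then have "x mod n = y mod n" by simp
    then show "x = y" using x y by (cases "x = n"; cases "y = n") auto
  qed
  show "(\<lambda>x. x mod n + 1) ` {1..n} = {1..n}"
  proof
    show "(\<lambda>x. x mod n + 1) ` {1..n} \<subseteq> {1..n}"
      using rotate_in_range by fastforce
    show "{1..n} \<subseteq> (\<lambda>x. x mod n + 1) ` {1..n}"
    proof
      fix y assume y: "y \<in> {1..n}"
      show "y \<in> (\<lambda>x. x mod n + 1) ` {1..n}"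
      proof (cases "y = 1")
        case True
        then show ?thesis using y by (intro image_eqI[of _ _ n]) auto
      next
        case False
        then show ?thesis using y by (intro image_eqI[of _ _ "y - 1"]) auto
      qed
    qed
  qed
qed

section \<open>Cyclic labellings\<close>

lemma rank_out_eq_card: "rank_out T c = card ({1..c} - T)"
  unfolding rank_out_def by (rule arg_cong[where f = card]) auto

lemma rank_out_empty: "rank_out {} c = c"
  by (simp add: rank_out_eq_card)

lemma rank_out_add: "c \<le> c' \<Longrightarrow> rank_out T c' = rank_out T c + card ({c<..c'} - T)"
proof -
  assume "c \<le> c'"
  then have "{1..c'} - T = ({1..c} - T) \<union> ({c<..c'} - T)" by auto
  moreover have "({1..c} - T) \<inter> ({c<..c'} - T) = {}" by auto
  ultimately show ?thesis by (simp add: rank_out_eq_card card_Un_disjoint)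
qed

lemma rank_out_mono: "c \<le> c' \<Longrightarrow> rank_out T c \<le> rank_out T c'"
  by (simp add: rank_out_add)

lemma rank_out_strict_mono: "c < c' \<Longrightarrow> c' \<notin> T \<Longrightarrow> rank_out T c < rank_out T c'"
proof -
  assume "c < c'" "c' \<notin> T"
  then have "c' \<in> {c<..c'} - T" by simp
  then have "0 < card ({c<..c'} - T)" by (auto simp: card_gt_0_iff)
  then show ?thesis using rank_out_add[of c c' T] \<open>c < c'\<close> by simp
qed

lemma rank_out_image: "rank_out T ` ({1..N} - T) = {1..rank_out T N}"
proof (rule card_subset_eq)
  show "rank_out T ` ({1..N} - T) \<subseteq> {1..rank_out T N}"
  proof
    fix m assume "m \<in> rank_out T ` ({1..N} - T)"
    then obtain c where c: "c \<in> {1..N} - T" "m = rank_out T c" by blast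
    have "0 < rank_out T c"
      using rank_out_strict_mono[of 0 c T] c(1) by (simp add: rank_out_eq_card)
    then show "m \<in> {1..rank_out T N}" using c rank_out_mono[of c N T] by simp
  qed
  have "strict_mono_on ({1..N} - T) (rank_out T)"
    by (auto intro: strict_mono_onI rank_out_strict_mono)
  then show "card (rank_out T ` ({1..N} - T)) = card {1..rank_out T N}"
    using card_image[OF strict_mono_on_imp_inj_on] rank_out_eq_card[of T N] by simp
qed simp

lemma rank_out_lower: "finite T \<Longrightarrow> N \<le> rank_out T N + card T"
proof -
  assume "finite T"
  have "N = card {1..N}" by simp
  also have "\<dots> \<le> card ({1..N} - T) + card T"
    using \<open>finite T\<close> card_Un_le[of "{1..N} - T" T] card_mono[of "({1..N} - T) \<union> T" "{1..N}"]
    by (simp add: Un_absorb2)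
  finally show ?thesis by (simp add: rank_out_eq_card)
qed

definition cyclic_label :: "nat set \<Rightarrow> nat \<Rightarrow> nat \<Rightarrow> nat" where
  "cyclic_label T f c = (rank_out T c - 1) mod f + 1"

lemma cyclic_label_range: "0 < f \<Longrightarrow> cyclic_label T f c \<in> {1..f}"
  by (simp add: cyclic_label_def Suc_leI)

lemma mod_neq_of_close: "x < y \<Longrightarrow> y < x + f \<Longrightarrow> (x::nat) mod f \<noteq> y mod f"
proof
  assume "x < y" "y < x + f" "x mod f = y mod f"
  then have "f dvd y - x" using mod_eq_dvd_iff_nat[of x y f] by simp
  then show False using \<open>x < y\<close> \<open>y < x + f\<close> by (auto dest: dvd_imp_le)
qed

lemma inj_on_cyclic_label:
  assumes "card ({a<..b} - T) \<le> f"
  shows "inj_on (cyclic_label T f) ({a<..b} - T)"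
proof (rule linorder_inj_onI)
  fix c c' assume cc': "c < c'" "c \<in> {a<..b} - T" "c' \<in> {a<..b} - T"
  have "{c<..c'} - T \<subseteq> ({a<..b} - T) - {c}" using cc' by auto
  moreover have "0 < card ({a<..b} - T)" using cc'(2) by (auto simp: card_gt_0_iff)
  ultimately have "card ({c<..c'} - T) < f"
    using assms cc'(2) card_mono[of "({a<..b} - T) - {c}" "{c<..c'} - T"] by (simp add: card_Diff_singleton)
  then have "rank_out T c' < rank_out T c + f"
    using rank_out_add[of c c' T] cc'(1) by simp
  moreover have "0 < rank_out T c"
    using rank_out_strict_mono[of 0 c T] cc'(2) by (simp add: rank_out_eq_card)
  moreover have "rank_out T c < rank_out T c'"
    using rank_out_strict_mono cc' by simp
  ultimately show "cyclic_label T f c \<noteq> cyclic_label T f c'"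
    unfolding cyclic_label_def using mod_neq_of_close[of "rank_out T c - 1" "rank_out T c' - 1" f] by simp
qed auto

lemma card_cyclic_label_preimage:
  assumes a: "a \<in> {1..f}" and k: "k * f \<le> rank_out T N"
  shows "k \<le> card {c \<in> {1..N} - T. cyclic_label T f c = a}"
proof -
  let ?C = "{c \<in> {1..N} - T. cyclic_label T f c = a}"
  have hit: "(\<lambda>t. a + t * f) ` {..<k} \<subseteq> rank_out T ` ?C"
  proof
    fix m assume "m \<in> (\<lambda>t. a + t * f) ` {..<k}"
    then obtain t where t: "t < k" "m = a + t * f" by blast
    have "a + t * f \<le> k * f"
      using a t(1) mult_le_mono1[of "Suc t" k f] by simp
    then have "m \<in> rank_out T ` ({1..N} - T)"
      using rank_out_image[of T N] a k t(2) by simp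
    then obtain c where c: "c \<in> {1..N} - T" "m = rank_out T c" by blast
    have "rank_out T c - 1 = (a - 1) + t * f" using a c(2) t(2) by simp
    then have "cyclic_label T f c = (a - 1 + t * f) mod f + 1"
      by (simp only: cyclic_label_def)
    also have "\<dots> = (a - 1) mod f + 1" by (simp only: mod_mult_self1)
    also have "\<dots> = a"
    proof -
      have "a - 1 < f" using a by auto
      then show ?thesis using a by simp
    qed
    finally have "cyclic_label T f c = a" .
    then show "m \<in> rank_out T ` ?C" using c by blast
  qed
  have "inj_on (\<lambda>t. a + t * f) {..<k}"
    using a by (simp add: inj_on_def)
  then have "k = card ((\<lambda>t. a + t * f) ` {..<k})" by (simp add: card_image)
  also have "\<dots> \<le> card (rank_out T ` ?C)" by (rule card_mono[OF _ hit]) simp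
  also have "\<dots> \<le> card ?C" by (rule card_image_le) simp
  finally show ?thesis by simp
qed

section \<open>Basic landmark systems\<close>

lemma two_le_card: "finite A \<Longrightarrow> x \<in> A \<Longrightarrow> y \<in> A \<Longrightarrow> x \<noteq> y \<Longrightarrow> 2 \<le> card A"
  using card_mono[of A "{x, y}"] by simp

lemma coord_simps [simp]:
  "coord 1 (x1, x2, x3) = x1" "coord (Suc 0) (x1, x2, x3) = x1"
  "coord 2 (x1, x2, x3) = x2" "coord 3 (x1, x2, x3) = x3"
  by (simp_all add: coord_def)

lemma dimn_simps [simp]:
  "dimn n1 n2 n3 1 = n1" "dimn n1 n2 n3 (Suc 0) = n1" "dimn n1 n2 n3 2 = n2" "dimn n1 n2 n3 3 = n3"
  by (simp_all add: dimn_def)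

lemma card_slice_Int_le_1:
  assumes "inj_on (\<lambda>w. (coord i w, coord j w)) W"
  shows "card (slice W i a \<inter> slice W j b) \<le> 1"
proof -
  have "card (slice W i a \<inter> slice W j b) \<le> card {(a, b)}"
    by (rule card_inj_on_le[OF inj_on_subset[OF assms]]) (auto simp: slice_def)
  then show ?thesis by simp
qed

lemma basic_landmark_systemI:
  assumes "W \<subseteq> vertices n1 n2 n3"
    and card_slice: "\<And>i a. i \<in> {1, 2, 3} \<Longrightarrow> a \<in> {1..dimn n1 n2 n3 i} \<Longrightarrow> 2 \<le> card (slice W i a)"
    and "inj_on (\<lambda>w. (coord 1 w, coord 2 w)) W" "inj_on (\<lambda>w. (coord 1 w, coord 3 w)) W"
      "inj_on (\<lambda>w. (coord 2 w, coord 3 w)) W"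
  shows "basic_landmark_system n1 n2 n3 W"
proof -
  have le_1: "card (slice W i a \<inter> slice W j b) \<le> 1 \<and> card (slice W j b \<inter> slice W i a) \<le> 1"
    if "inj_on (\<lambda>w. (coord i w, coord j w)) W" for i j a b
    using card_slice_Int_le_1[OF that] by (simp add: Int_commute)
  have pairs: "card (slice W i a \<inter> slice W j b) \<le> 1" if "i \<in> {1, 2, 3}" "j \<in> {1, 2, 3}" "i \<noteq> j" for i j a b
    using that le_1[OF assms(3)] le_1[OF assms(4)] le_1[OF assms(5)] by auto
  have nonempty: "slice W i a \<noteq> {}" if "i \<in> {1, 2, 3}" "a \<in> {1..dimn n1 n2 n3 i}" for i a
    using card_slice[OF that] by auto
  show ?thesis
    unfolding basic_landmark_system_def using assms(1) card_slice nonempty pairs by simp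
qed

section \<open>Blocks of columns\<close>

locale column_blocks =
  fixes n1 n3 :: nat
  assumes n1_pos: "0 < n1" and n1_le_n3: "n1 \<le> n3"
begin

abbreviation "q \<equiv> n3 div n1"
abbreviation "r \<equiv> n3 mod n1"
abbreviation "l \<equiv> ell n1 n3"
abbreviation "L \<equiv> Lsum n1 n3"
abbreviation "B \<equiv> blk n1 n3"

definition block :: "nat \<Rightarrow> nat set" where
  "block i = {L i<..L i + l i}"

lemma ell_few_long: "2 * r \<le> n1 \<Longrightarrow> l i = q + of_bool (odd i \<and> i \<le> 2 * r)"
  by (auto simp: ell_def Let_def)

lemma ell_many_long: "\<not> 2 * r \<le> n1 \<Longrightarrow> 0 < i \<Longrightarrow> l i + of_bool (even i \<and> i \<le> 2 * (n1 - r)) = q + 1"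
  by (auto simp: ell_def Let_def)

lemma ell_cases: "l i = q \<or> l i = q + 1"
  by (auto simp: ell_def Let_def)

lemma q_pos: "0 < q"
  using n1_pos n1_le_n3 by (simp add: div_greater_zero_iff)

lemma ell_pos: "0 < l i"
  using ell_cases[of i] q_pos by auto

lemma sum_ell: "(\<Sum>i\<in>{1..n1}. l i) = n3"
proof (cases "2 * r \<le> n1")
  case True
  have "{1..n1} \<inter> {i. odd i \<and> i \<le> 2 * r} = {i. odd i \<and> i \<le> 2 * r}"
    using True by (auto elim: oddE)
  then have "(\<Sum>i\<in>{1..n1}. l i) = n1 * q + r"
    using True by (simp add: ell_few_long sum.distrib card_odd_atMost_double)
  then show ?thesis by simp
next
  case False
  have "{1..n1} \<inter> {i. even i \<and> i \<le> 2 * (n1 - r)} = {i. even i \<and> 0 < i \<and> i \<le> 2 * (n1 - r)}"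
    using False by auto
  moreover have "(\<Sum>i\<in>{1..n1}. l i + of_bool (even i \<and> i \<le> 2 * (n1 - r))) = n1 * (q + 1)"
    using False by (simp add: ell_many_long)
  ultimately have "(\<Sum>i\<in>{1..n1}. l i) + (n1 - r) = n1 * q + n1"
    by (simp add: sum.distrib card_even_pos_atMost_double)
  moreover have "n3 = n1 * q + r" by simp
  ultimately show ?thesis
    using mod_less_divisor[OF n1_pos, of n3] by linarith
qed

lemma Lsum_Suc: "0 < i \<Longrightarrow> L (Suc i) = L i + l i"
  by (simp add: Lsum_def atLeastLessThanSuc add.commute)

lemma Lsum_end: "L (Suc n1) = n3"
  using sum_ell by (simp add: Lsum_def atLeastLessThanSuc_atLeastAtMost)

lemma block_end_le_Lsum: "0 < i \<Longrightarrow> i < j \<Longrightarrow> L i + l i \<le> L j"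
proof -
  assume "0 < i" "i < j"
  then have "L i + l i = (\<Sum>k\<in>{1..<Suc i}. l k)"
    by (simp add: Lsum_def atLeastLessThanSuc add.commute)
  also have "\<dots> \<le> L j"
    unfolding Lsum_def using \<open>i < j\<close> by (intro sum_mono2) auto
  finally show ?thesis .
qed

lemma Union_blocks: "(\<Union>i\<in>{1..n}. block i) = {0<..L (Suc n)}"
proof (induction n)
  case 0
  then show ?case by (simp add: Lsum_def)
next
  case (Suc n)
  have "(\<Union>i\<in>{1..Suc n}. block i) = (\<Union>i\<in>{1..n}. block i) \<union> block (Suc n)"
    by (simp add: atLeastAtMostSuc_conv Un_commute)
  also have "\<dots> = {0<..L (Suc n)} \<union> {L (Suc n)<..L (Suc (Suc n))}"
    by (simp only: Suc.IH) (simp add: block_def Lsum_Suc)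
  also have "\<dots> = {0<..L (Suc (Suc n))}"
    by (simp add: Lsum_Suc ivl_disj_un)
  finally show ?case .
qed

lemma blocks_disjoint: "i \<in> {1..n1} \<Longrightarrow> j \<in> {1..n1} \<Longrightarrow> c \<in> block i \<Longrightarrow> c \<in> block j \<Longrightarrow> i = j"
  using block_end_le_Lsum[of i j] block_end_le_Lsum[of j i]
  by (cases i j rule: linorder_cases) (auto simp: block_def)

lemma blk_eqI: "i \<in> {1..n1} \<Longrightarrow> c \<in> block i \<Longrightarrow> B c = i"
  unfolding blk_def by (rule the_equality) (auto simp: block_def intro: blocks_disjoint)

lemma blk_in_block: "c \<in> {1..n3} \<Longrightarrow> B c \<in> {1..n1} \<and> c \<in> block (B c)"
proof -
  assume "c \<in> {1..n3}"
  then have "c \<in> (\<Union>i\<in>{1..n1}. block i)"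
    by (simp only: Union_blocks Lsum_end) simp
  then obtain i where "i \<in> {1..n1}" "c \<in> block i" by blast
  then show ?thesis using blk_eqI by simp
qed

lemma block_subset: "i \<in> {1..n1} \<Longrightarrow> block i \<subseteq> {1..n3}"
proof -
  assume "i \<in> {1..n1}"
  then have "block i \<subseteq> (\<Union>j\<in>{1..n1}. block j)" by blast
  also have "\<dots> = {0<..n3}" by (simp only: Union_blocks Lsum_end)
  finally show ?thesis by auto
qed

lemma card_block: "card (block i) = l i"
  by (simp add: block_def)

lemma first_in_block: "L i + 1 \<in> block i"
  using ell_pos[of i] by (simp add: block_def)

lemma second_in_block: "2 \<le> l i \<Longrightarrow> L i + 2 \<in> block i"
  by (simp add: block_def)

abbreviation next_block :: "nat \<Rightarrow> nat" where
  "next_block i \<equiv> i mod n1 + 1"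

abbreviation landmarks :: "(nat \<Rightarrow> nat) \<Rightarrow> (nat \<Rightarrow> nat) \<Rightarrow> vert set" where
  "landmarks yL yR \<equiv> WLeft n1 n3 yL \<union> WRight n1 n3 yR"

lemma landmarks_eq:
  "landmarks yL yR = (\<lambda>c. (B c, yL c, c)) ` {1..n3} \<union> (\<lambda>c. (next_block (B c), yR c, c)) ` {1..n3}"
  by (auto simp: WLeft_def WRight_def)

lemma next_block_inj: "x \<in> {1..n1} \<Longrightarrow> y \<in> {1..n1} \<Longrightarrow> next_block x = next_block y \<Longrightarrow> x = y"
  by (rule inj_onD[OF bij_betw_imp_inj_on[OF bij_betw_rotate]])

lemma next_block_surj: "a \<in> {1..n1} \<Longrightarrow> \<exists>p\<in>{1..n1}. next_block p = a"
proof -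
  assume "a \<in> {1..n1}"
  moreover have "next_block ` {1..n1} = {1..n1}" by (rule bij_betw_imp_surj_on[OF bij_betw_rotate])
  ultimately have "a \<in> next_block ` {1..n1}" by simp
  then show ?thesis by blast
qed

lemma landmarks_subset_vertices:
  "yL ` {1..n3} \<subseteq> {1..n2} \<Longrightarrow> yR ` {1..n3} \<subseteq> {1..n2} \<Longrightarrow> landmarks yL yR \<subseteq> vertices n1 n2 n3"
  unfolding landmarks_eq vertices_def
  using blk_in_block rotate_in_range[OF n1_pos] by auto

lemma inj_on_coord12_landmarks:
  assumes inj_left: "inj_on (\<lambda>c. (B c, yL c)) {1..n3}"
    and inj_right: "inj_on (\<lambda>c. (B c, yR c)) {1..n3}"
    and across: "\<And>c c'. c \<in> {1..n3} \<Longrightarrow> c' \<in> {1..n3} \<Longrightarrow> B c = next_block (B c') \<Longrightarrow> yL c \<noteq> yR c'"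
  shows "inj_on (\<lambda>w. (coord 1 w, coord 2 w)) (landmarks yL yR)"
proof (rule inj_onI)
  fix w w' assume w: "w \<in> landmarks yL yR" and w': "w' \<in> landmarks yL yR"
    and eq: "(coord 1 w, coord 2 w) = (coord 1 w', coord 2 w')"
  from w obtain c where c: "c \<in> {1..n3}" "w = (B c, yL c, c) \<or> w = (next_block (B c), yR c, c)"
    unfolding landmarks_eq by blast
  from w' obtain c' where c': "c' \<in> {1..n3}" "w' = (B c', yL c', c') \<or> w' = (next_block (B c'), yR c', c')"
    unfolding landmarks_eq by blast
  have blocks: "B c \<in> {1..n1}" "B c' \<in> {1..n1}"
    using blk_in_block c(1) c'(1) by auto
  from c(2) c'(2) show "w = w'"
  proof (elim disjE)
    assume "w = (B c, yL c, c)" "w' = (B c', yL c', c')"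
    then show ?thesis using eq inj_onD[OF inj_left, of c c'] c(1) c'(1) by simp
  next
    assume "w = (B c, yL c, c)" "w' = (next_block (B c'), yR c', c')"
    then show ?thesis using eq across[OF c(1) c'(1)] by simp
  next
    assume "w = (next_block (B c), yR c, c)" "w' = (B c', yL c', c')"
    then show ?thesis using eq across[OF c'(1) c(1)] by simp
  next
    assume "w = (next_block (B c), yR c, c)" "w' = (next_block (B c'), yR c', c')"
    then show ?thesis using eq next_block_inj[OF blocks] inj_onD[OF inj_right, of c c'] c(1) c'(1) by simp
  qed
qed

lemma inj_on_coord13_landmarks:
  assumes "2 \<le> n1"
  shows "inj_on (\<lambda>w. (coord 1 w, coord 3 w)) (landmarks yL yR)"
proof -
  have "next_block (B c) \<noteq> B c \<and> B c \<noteq> next_block (B c)" if "c \<in> {1..n3}" for c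
    using rotate_neq[OF assms, of "B c"] blk_in_block[OF that] by auto
  then show ?thesis by (auto simp: landmarks_eq inj_on_def)
qed

lemma inj_on_coord23_landmarks:
  assumes "\<And>c. c \<in> {1..n3} \<Longrightarrow> yL c \<noteq> yR c"
  shows "inj_on (\<lambda>w. (coord 2 w, coord 3 w)) (landmarks yL yR)"
proof -
  have "yR c \<noteq> yL c" if "c \<in> {1..n3}" for c
    using assms[OF that] by simp
  then show ?thesis using assms by (auto simp: landmarks_eq inj_on_def)
qed

lemma left_in_landmarks: "c \<in> {1..n3} \<Longrightarrow> (B c, yL c, c) \<in> landmarks yL yR"
  by (simp add: landmarks_eq)

lemma right_in_landmarks: "c \<in> {1..n3} \<Longrightarrow> (next_block (B c), yR c, c) \<in> landmarks yL yR"
  by (simp add: landmarks_eq)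

lemma finite_slice_landmarks: "finite (slice (landmarks yL yR) i a)"
  by (simp add: landmarks_eq slice_def)

lemma card_slice1_landmarks:
  assumes "2 \<le> n1" and a: "a \<in> {1..n1}"
  shows "2 \<le> card (slice (landmarks yL yR) 1 a)"
proof -
  obtain p where p: "p \<in> {1..n1}" "next_block p = a" using next_block_surj[OF a] by blast
  let ?c = "L a + 1" and ?c' = "L p + 1"
  have blocks: "B ?c = a" "B ?c' = p"
    using blk_eqI first_in_block a p(1) by auto
  have cols: "?c \<in> {1..n3}" "?c' \<in> {1..n3}"
    using block_subset first_in_block a p(1) by blast+
  have "(B ?c, yL ?c, ?c) \<in> slice (landmarks yL yR) 1 a"
    using left_in_landmarks[OF cols(1)] blocks by (simp add: slice_def)
  moreover have "(next_block (B ?c'), yR ?c', ?c') \<in> slice (landmarks yL yR) 1 a"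
    using right_in_landmarks[OF cols(2)] blocks p(2) by (simp add: slice_def)
  moreover have "(B ?c, yL ?c, ?c) \<noteq> (next_block (B ?c'), yR ?c', ?c')"
    using blocks rotate_neq[OF assms(1) p(1)] by auto
  ultimately show ?thesis by (intro two_le_card finite_slice_landmarks)
qed

lemma card_slice2_landmarks:
  assumes "2 \<le> card {c \<in> {1..n3}. yL c = a \<or> yR c = a}"
  shows "2 \<le> card (slice (landmarks yL yR) 2 a)"
proof -
  have "{c \<in> {1..n3}. yL c = a \<or> yR c = a} \<subseteq> coord 3 ` slice (landmarks yL yR) 2 a"
  proof
    fix c assume c: "c \<in> {c \<in> {1..n3}. yL c = a \<or> yR c = a}"
    then have "(B c, yL c, c) \<in> slice (landmarks yL yR) 2 a \<or> (next_block (B c), yR c, c) \<in> slice (landmarks yL yR) 2 a"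
      using left_in_landmarks right_in_landmarks by (auto simp: slice_def)
    then show "c \<in> coord 3 ` slice (landmarks yL yR) 2 a"
      by (auto intro: rev_image_eqI)
  qed
  then have "card {c \<in> {1..n3}. yL c = a \<or> yR c = a} \<le> card (coord 3 ` slice (landmarks yL yR) 2 a)"
    by (intro card_mono) (simp_all add: finite_slice_landmarks)
  also have "\<dots> \<le> card (slice (landmarks yL yR) 2 a)"
    by (rule card_image_le[OF finite_slice_landmarks])
  finally show ?thesis using assms by simp
qed

lemma card_slice3_landmarks:
  assumes "2 \<le> n1" and c: "c \<in> {1..n3}"
  shows "2 \<le> card (slice (landmarks yL yR) 3 c)"
proof -
  have "(B c, yL c, c) \<in> slice (landmarks yL yR) 3 c" "(next_block (B c), yR c, c) \<in> slice (landmarks yL yR) 3 c"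
    using left_in_landmarks[OF c] right_in_landmarks[OF c] by (simp_all add: slice_def)
  moreover have "(B c, yL c, c) \<noteq> (next_block (B c), yR c, c)"
    using rotate_neq[OF assms(1), of "B c"] blk_in_block[OF c] by auto
  ultimately show ?thesis by (intro two_le_card finite_slice_landmarks)
qed

lemma basic_landmark_system_landmarks:
  assumes "2 \<le> n1"
    and "yL ` {1..n3} \<subseteq> {1..n2}" "yR ` {1..n3} \<subseteq> {1..n2}"
    and "\<And>c. c \<in> {1..n3} \<Longrightarrow> yL c \<noteq> yR c"
    and "inj_on (\<lambda>c. (B c, yL c)) {1..n3}" "inj_on (\<lambda>c. (B c, yR c)) {1..n3}"
    and "\<And>c c'. c \<in> {1..n3} \<Longrightarrow> c' \<in> {1..n3} \<Longrightarrow> B c = next_block (B c') \<Longrightarrow> yL c \<noteq> yR c'"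
    and "\<And>a. a \<in> {1..n2} \<Longrightarrow> 2 \<le> card {c \<in> {1..n3}. yL c = a \<or> yR c = a}"
  shows "basic_landmark_system n1 n2 n3 (landmarks yL yR)"
proof (rule basic_landmark_systemI)
  show "landmarks yL yR \<subseteq> vertices n1 n2 n3"
    using assms(2,3) by (rule landmarks_subset_vertices)
  show "inj_on (\<lambda>w. (coord 1 w, coord 2 w)) (landmarks yL yR)"
    using assms(5-7) by (rule inj_on_coord12_landmarks)
  show "inj_on (\<lambda>w. (coord 1 w, coord 3 w)) (landmarks yL yR)"
    using assms(1) by (rule inj_on_coord13_landmarks)
  show "inj_on (\<lambda>w. (coord 2 w, coord 3 w)) (landmarks yL yR)"
    using assms(4) by (rule inj_on_coord23_landmarks)
  fix i a assume "i \<in> {1, 2, 3}" "a \<in> {1..dimn n1 n2 n3 i}"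
  then show "2 \<le> card (slice (landmarks yL yR) i a)"
    using card_slice1_landmarks card_slice2_landmarks card_slice3_landmarks assms(1,8) by auto
qed

lemma inj_on_blk_cyclic_label:
  assumes "\<And>i. i \<in> {1..n1} \<Longrightarrow> card (block i - T) \<le> f"
  shows "inj_on (\<lambda>c. (B c, cyclic_label T f c)) ({1..n3} - T)"
proof (rule inj_onI)
  fix c c' assume c: "c \<in> {1..n3} - T" and c': "c' \<in> {1..n3} - T"
    and eq: "(B c, cyclic_label T f c) = (B c', cyclic_label T f c')"
  let ?i = "B c"
  have "c \<in> block ?i - T" "c' \<in> block ?i - T" "?i \<in> {1..n1}"
    using blk_in_block[of c] blk_in_block[of c'] c c' eq by auto
  moreover have "inj_on (cyclic_label T f) (block ?i - T)"
    unfolding block_def by (rule inj_on_cyclic_label) (use assms \<open>?i \<in> {1..n1}\<close> in \<open>simp add: block_def\<close>)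
  ultimately show "c = c'" using eq by (auto dest: inj_onD)
qed

lemma card_block_Diff_le:
  assumes "l i \<le> f \<or> (l i \<le> f + 1 \<and> x \<in> block i \<inter> T)"
  shows "card (block i - T) \<le> f"
proof (cases "l i \<le> f")
  case True
  then show ?thesis using card_mono[of "block i" "block i - T"] by (auto simp: card_block block_def)
next
  case False
  with assms have x: "x \<in> block i" "x \<in> T" and "l i \<le> f + 1" by auto
  have "card (block i - T) \<le> card (block i - {x})"
    using x by (intro card_mono) (auto simp: block_def)
  also have "\<dots> = l i - 1" using x(1) by (simp add: card_block block_def)
  finally show ?thesis using \<open>l i \<le> f + 1\<close> by simp
qed

lemma basic_landmark_system_even:
  assumes "2 \<le> n1" and "0 < h" and "\<And>i. i \<in> {1..n1} \<Longrightarrow> l i \<le> h" and "2 * h \<le> n3"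
  shows "basic_landmark_system n1 (2 * h) n3 (landmarks (cyclic_label {} h) (\<lambda>c. h + cyclic_label {} h c))"
proof (rule basic_landmark_system_landmarks)
  have range: "cyclic_label {} h c \<in> {1..h}" for c
    using cyclic_label_range[OF \<open>0 < h\<close>] .
  show "cyclic_label {} h ` {1..n3} \<subseteq> {1..2 * h}"
  proof (rule image_subsetI)
    fix c show "cyclic_label {} h c \<in> {1..2 * h}" using range[of c] by simp
  qed
  show "(\<lambda>c. h + cyclic_label {} h c) ` {1..n3} \<subseteq> {1..2 * h}"
  proof (rule image_subsetI)
    fix c show "h + cyclic_label {} h c \<in> {1..2 * h}" using range[of c] by simp
  qed
  have differ: "cyclic_label {} h c \<noteq> h + cyclic_label {} h c'" for c c'
    using range[of c] range[of c'] by simp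
  then show "cyclic_label {} h c \<noteq> h + cyclic_label {} h c" for c .
  show "cyclic_label {} h c \<noteq> h + cyclic_label {} h c'" for c c' by (rule differ)
  have "inj_on (\<lambda>c. (B c, cyclic_label {} h c)) ({1..n3} - {})"
    using assms(3) by (intro inj_on_blk_cyclic_label) (simp add: card_block)
  then show inj: "inj_on (\<lambda>c. (B c, cyclic_label {} h c)) {1..n3}" by simp
  show "inj_on (\<lambda>c. (B c, h + cyclic_label {} h c)) {1..n3}"
  proof (rule inj_onI)
    fix c c' assume "c \<in> {1..n3}" "c' \<in> {1..n3}"
      and "(B c, h + cyclic_label {} h c) = (B c', h + cyclic_label {} h c')"
    then show "c = c'" using inj_onD[OF inj, of c c'] by simp
  qed
  fix a assume a: "a \<in> {1..2 * h}"
  have "2 * h \<le> rank_out {} n3" unfolding rank_out_empty by (rule assms(4))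
  show "2 \<le> card {c \<in> {1..n3}. cyclic_label {} h c = a \<or> h + cyclic_label {} h c = a}"
  proof (cases "a \<le> h")
    case True
    then have "2 \<le> card {c \<in> {1..n3} - {}. cyclic_label {} h c = a}"
      using a \<open>2 * h \<le> rank_out {} n3\<close> by (intro card_cyclic_label_preimage) auto
    also have "\<dots> \<le> card {c \<in> {1..n3}. cyclic_label {} h c = a \<or> h + cyclic_label {} h c = a}"
      by (rule card_mono) auto
    finally show ?thesis .
  next
    case False
    then have "2 \<le> card {c \<in> {1..n3} - {}. cyclic_label {} h c = a - h}"
      using a \<open>2 * h \<le> rank_out {} n3\<close> by (intro card_cyclic_label_preimage) auto
    also have "\<dots> \<le> card {c \<in> {1..n3}. cyclic_label {} h c = a \<or> h + cyclic_label {} h c = a}"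
      using False by (intro card_mono) force+
    finally show ?thesis .
  qed
qed (use assms(1) in simp)

text \<open>
  The odd construction: S, the paper's S, consists of the first columns of the blocks in I and
  carries the top label 2f + 1 on the left; S', the paper's S + 1, consists of their second columns
  and carries it on the right. M contains the column of the modified landmark, if any.
\<close>

context
  fixes I M :: "nat set" and f :: nat
  assumes two_le_n1: "2 \<le> n1" and f_pos: "0 < f"
    and I_sub: "I \<subseteq> {1..n1}" and I_ne: "I \<noteq> {}" and I_long: "\<And>i. i \<in> I \<Longrightarrow> 2 \<le> l i"
    and I_disjoint: "I \<inter> next_block ` I = {}"
    and ell_bound: "\<And>i. i \<in> {1..n1} \<Longrightarrow> l i \<le> f \<or> (i \<in> I \<and> l i \<le> f + 1)"
    and size: "3 * f + card I \<le> n3"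
    and M_sub: "M \<subseteq> {1..n3}" and M_card: "card M \<le> 1"
    and M_blocks: "\<And>c. c \<in> M \<Longrightarrow> B c \<notin> I \<union> next_block ` I"
begin

abbreviation "S \<equiv> (\<lambda>i. L i + 1) ` I"
abbreviation "S' \<equiv> (\<lambda>i. L i + 2) ` I"
abbreviation "left_label c \<equiv> if c \<in> S \<union> M then 2 * f + 1 else cyclic_label S f c"
abbreviation "right_label c \<equiv> if c \<in> S' then 2 * f + 1 else f + cyclic_label S' f c"

lemma S_memD: "c \<in> S \<Longrightarrow> B c \<in> I \<and> L (B c) + 1 = c \<and> c \<in> {1..n3}"
proof -
  assume "c \<in> S"
  then obtain i where i: "i \<in> I" "c = L i + 1" by blast
  have i_blk: "i \<in> {1..n1}" using I_sub i(1) by blast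
  have "c \<in> block i" using i(2) first_in_block by simp
  then have "B c = i" "c \<in> {1..n3}" using blk_eqI[OF i_blk] block_subset[OF i_blk] by auto
  then show ?thesis using i by simp
qed

lemma S'_memD: "c \<in> S' \<Longrightarrow> B c \<in> I \<and> L (B c) + 2 = c \<and> c \<in> {1..n3}"
proof -
  assume "c \<in> S'"
  then obtain i where i: "i \<in> I" "c = L i + 2" by blast
  have i_blk: "i \<in> {1..n1}" using I_sub i(1) by blast
  have "c \<in> block i" using i second_in_block I_long by simp
  then have "B c = i" "c \<in> {1..n3}" using blk_eqI[OF i_blk] block_subset[OF i_blk] by auto
  then show ?thesis using i by simp
qed

lemma M_unique: "c \<in> M \<Longrightarrow> c' \<in> M \<Longrightarrow> c = c'"
  using M_card card_le_Suc0_iff_eq[OF finite_subset[OF M_sub]] by auto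

lemma left_top_unique: "c \<in> S \<union> M \<Longrightarrow> c' \<in> S \<union> M \<Longrightarrow> B c = B c' \<Longrightarrow> c = c'"
  using S_memD M_unique M_blocks by (metis Un_iff)

lemma card_block_Diff_S: "i \<in> {1..n1} \<Longrightarrow> card (block i - S) \<le> f"
  using ell_bound[of i] first_in_block[of i] by (intro card_block_Diff_le[of i f "L i + 1"]) auto

lemma card_block_Diff_S': "i \<in> {1..n1} \<Longrightarrow> card (block i - S') \<le> f"
  using ell_bound[of i] I_long[of i] second_in_block[of i] by (intro card_block_Diff_le[of i f "L i + 2"]) auto

lemma inj_left_label: "inj_on (\<lambda>c. (B c, left_label c)) {1..n3}"
proof (rule inj_onI)
  fix c c' assume c: "c \<in> {1..n3}" and c': "c' \<in> {1..n3}"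
    and eq: "(B c, left_label c) = (B c', left_label c')"
  show "c = c'"
  proof (cases "c \<in> S \<union> M")
    case True
    then have "c' \<in> S \<union> M" using eq cyclic_label_range[OF f_pos, of S c'] by (auto split: if_splits)
    then show ?thesis using True eq by (intro left_top_unique[of c c']) auto
  next
    case False
    then have c'_out: "c' \<notin> S \<union> M" using eq cyclic_label_range[OF f_pos, of S c] by (auto split: if_splits)
    then have "(B c, cyclic_label S f c) = (B c', cyclic_label S f c')" using False eq by simp
    then show ?thesis
      using inj_onD[OF inj_on_blk_cyclic_label[OF card_block_Diff_S]] c c' False c'_out by blast
  qed
qed

lemma inj_right_label: "inj_on (\<lambda>c. (B c, right_label c)) {1..n3}"
proof (rule inj_onI)
  fix c c' assume c: "c \<in> {1..n3}" and c': "c' \<in> {1..n3}"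
    and eq: "(B c, right_label c) = (B c', right_label c')"
  show "c = c'"
  proof (cases "c \<in> S'")
    case True
    then have "c' \<in> S'" using eq cyclic_label_range[OF f_pos, of S' c'] by (auto split: if_splits)
    moreover have "B c = B c'" using eq by simp
    ultimately show ?thesis using S'_memD[OF True] S'_memD[of c'] by metis
  next
    case False
    then have c'_out: "c' \<notin> S'" using eq cyclic_label_range[OF f_pos, of S' c] by (auto split: if_splits)
    then have "(B c, cyclic_label S' f c) = (B c', cyclic_label S' f c')" using False eq by simp
    then show ?thesis
      using inj_onD[OF inj_on_blk_cyclic_label[OF card_block_Diff_S']] c c' False c'_out by blast
  qed
qed

lemma left_label_eq_right_label:
  assumes "left_label c = right_label c'"
  shows "c \<in> S \<union> M" and "c' \<in> S'"
proof -
  have "f < right_label c'" using cyclic_label_range[OF f_pos, of S' c'] by simp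
  moreover have "left_label c \<le> f" if "c \<notin> S \<union> M" using that cyclic_label_range[OF f_pos, of S c] by simp
  ultimately show "c \<in> S \<union> M" using assms by fastforce
  then show "c' \<in> S'" using assms cyclic_label_range[OF f_pos, of S' c'] by (auto split: if_splits)
qed

lemma left_right_label_differ: "left_label c \<noteq> right_label c"
proof
  assume eq: "left_label c = right_label c"
  then have "c \<in> S'" and "c \<in> S \<union> M" by (rule left_label_eq_right_label)+
  moreover have "B c \<in> I" "L (B c) + 2 = c" using S'_memD[OF \<open>c \<in> S'\<close>] by auto
  ultimately show False using S_memD[of c] M_blocks[of c] by auto
qed

lemma left_right_label_next_block: "B c = next_block (B c') \<Longrightarrow> left_label c \<noteq> right_label c'"
proof
  assume adj: "B c = next_block (B c')" and eq: "left_label c = right_label c'"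
  have "B c' \<in> I" using S'_memD left_label_eq_right_label(2)[OF eq] by blast
  then have "B c \<in> next_block ` I" using adj by blast
  moreover have "c \<in> S \<union> M" using left_label_eq_right_label(1)[OF eq] .
  ultimately show False using S_memD M_blocks I_disjoint by blast
qed

lemma two_le_card_label_preimage:
  assumes a: "a \<in> {1..2 * f + 1}"
  shows "2 \<le> card {c \<in> {1..n3}. left_label c = a \<or> right_label c = a}"
proof -
  let ?C = "{c \<in> {1..n3}. left_label c = a \<or> right_label c = a}"
  have fin: "finite ?C" by simp
  have finite_I: "finite I" using I_sub finite_subset by blast
  have rank: "3 * f \<le> rank_out T n3" if "T = S \<or> T = S'" for T
  proof -
    have "finite T" "card T \<le> card I" using that finite_I card_image_le by auto
    then show ?thesis using rank_out_lower[of T n3] size by linarith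
  qed
  consider (low) "a \<le> f" | (high) "f < a" "a \<le> 2 * f" | (top) "a = 2 * f + 1"
    using a by (cases "a \<le> f"; cases "a \<le> 2 * f") auto
  then show ?thesis
  proof cases
    case low
    let ?X = "{c \<in> {1..n3} - S. cyclic_label S f c = a}"
    have "3 \<le> card ?X" using low a rank[of S] by (intro card_cyclic_label_preimage) auto
    moreover have "card ?X - card M \<le> card (?X - M)"
      using M_sub by (intro diff_card_le_card_Diff) (simp add: finite_subset)
    moreover have "card (?X - M) \<le> card ?C" by (rule card_mono[OF fin]) auto
    ultimately show ?thesis using M_card by linarith
  next
    case high
    let ?X = "{c \<in> {1..n3} - S'. cyclic_label S' f c = a - f}"
    have "3 \<le> card ?X" using high rank[of S'] by (intro card_cyclic_label_preimage) auto
    moreover have "card ?X \<le> card ?C" using high by (intro card_mono[OF fin]) auto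
    ultimately show ?thesis by linarith
  next
    case top
    obtain i where "i \<in> I" using I_ne by blast
    then have "L i + 1 \<in> S" "L i + 2 \<in> S'" by auto
    then have "L i + 1 \<in> ?C" "L i + 2 \<in> ?C" using S_memD S'_memD top by auto
    then show ?thesis by (intro two_le_card[OF fin, of "L i + 1" "L i + 2"]) auto
  qed
qed

lemma basic_landmark_system_odd:
  "basic_landmark_system n1 (2 * f + 1) n3 (landmarks left_label right_label)"
proof (rule basic_landmark_system_landmarks)
  show "left_label ` {1..n3} \<subseteq> {1..2 * f + 1}"
  proof (rule image_subsetI)
    fix c show "left_label c \<in> {1..2 * f + 1}" using cyclic_label_range[OF f_pos, of S c] by simp
  qed
  show "right_label ` {1..n3} \<subseteq> {1..2 * f + 1}"
  proof (rule image_subsetI)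
    fix c show "right_label c \<in> {1..2 * f + 1}" using cyclic_label_range[OF f_pos, of S' c] by simp
  qed
qed (use two_le_n1 inj_left_label inj_right_label left_right_label_differ left_right_label_next_block
  two_le_card_label_preimage in auto)

end

end

section \<open>The Middle Cone Construction\<close>

locale middle_cone_params = column_blocks +
  fixes n2 :: nat
  assumes three_le_n1: "3 \<le> n1" and three_le_n2: "3 \<le> n2"
    and lower_bound: "3 * max n1 n2 \<le> 2 * n3" and upper_bound: "2 * n3 \<le> n1 * n2"
begin

lemma n3_eq: "n1 * q + r = n3"
  by (rule mult_div_mod_eq)

lemma double_q_le: "2 * q \<le> n2"
proof -
  have "2 * (n1 * q) \<le> n1 * n2"
    using n3_eq upper_bound by linarith
  then have "n1 * (2 * q) \<le> n1 * n2"
    by (simp only: mult.left_commute[of n1 2 q])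
  then show ?thesis using n1_pos by simp
qed

lemma ell_le_half_even: "even n2 \<Longrightarrow> l i \<le> n2 div 2"
proof -
  assume "even n2"
  show ?thesis
  proof (cases "2 * q = n2")
    case True
    then have "n1 * n2 = 2 * (n1 * q)" by auto
    then have "r = 0" using n3_eq upper_bound by linarith
    then have "l i = q" using n1_pos by (cases i) (simp_all add: ell_few_long)
    then show ?thesis using True by simp
  next
    case False
    then show ?thesis using double_q_le ell_cases[of i] \<open>even n2\<close> by auto
  qed
qed

lemma odd_n2_eq: "odd n2 \<Longrightarrow> 2 * fpar n2 + 1 = n2"
  by (simp add: fpar_def)

lemma ell_le_odd: "odd n2 \<Longrightarrow> l i \<le> fpar n2 + 1"
  using double_q_le ell_cases[of i] odd_n2_eq by fastforce

lemma long_blockD: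
  assumes "odd n2" and "fpar n2 < l i"
  shows "q = fpar n2 \<and> 2 * r \<le> n1 \<and> odd i \<and> i \<le> 2 * r"
proof -
  have q: "q = fpar n2" "l i = q + 1"
    using assms double_q_le ell_cases[of i] odd_n2_eq by fastforce+
  have "n2 = 2 * q + 1" using odd_n2_eq[OF assms(1)] q(1) by simp
  then have "n1 * n2 = 2 * (n1 * q) + n1" by (simp add: algebra_simps)
  then have "2 * r \<le> n1"
    using n3_eq upper_bound by linarith
  moreover from this have "odd i \<and> i \<le> 2 * r"
    using q(2) ell_few_long[of i] by (cases "odd i \<and> i \<le> 2 * r") auto
  ultimately show ?thesis using q(1) by simp
qed

lemma card_bigblocks_le: "odd n2 \<Longrightarrow> card (bigblocks n1 n2 n3) \<le> r"
proof -
  assume "odd n2"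
  then have "bigblocks n1 n2 n3 \<subseteq> {i. odd i \<and> i \<le> 2 * r}"
    using long_blockD by (auto simp: bigblocks_def)
  then have "card (bigblocks n1 n2 n3) \<le> card {i. odd i \<and> i \<le> 2 * r}"
    by (rule card_mono[rotated]) (rule finite_subset[of _ "{..2 * r}"], auto)
  then show ?thesis by (simp add: card_odd_atMost_double)
qed

lemma bigblocks_next_block_disjoint: "odd n2 \<Longrightarrow> bigblocks n1 n2 n3 \<inter> next_block ` bigblocks n1 n2 n3 = {}"
proof (rule ccontr)
  assume "odd n2" "bigblocks n1 n2 n3 \<inter> next_block ` bigblocks n1 n2 n3 \<noteq> {}"
  then obtain i j where ij: "i \<in> bigblocks n1 n2 n3" "j \<in> bigblocks n1 n2 n3" "i = next_block j" by blast
  then have "fpar n2 < l i" "fpar n2 < l j" "j \<in> {1..n1}" by (auto simp: bigblocks_def)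
  then have "odd i" "odd j" "j \<le> 2 * r" "2 * r \<le> n1" "j \<in> {1..n1}"
    using long_blockD[OF \<open>odd n2\<close>] by blast+
  then have "i = (if j = n1 then 1 else j + 1)"
    using ij(3) rotate_eq by simp
  show False
  proof (cases "j = n1")
    case True
    then have "j = 2 * r" using \<open>j \<le> 2 * r\<close> \<open>2 * r \<le> n1\<close> by simp
    then show False using \<open>odd j\<close> by simp
  next
    case False
    then show False using \<open>i = (if j = n1 then 1 else j + 1)\<close> \<open>odd i\<close> \<open>odd j\<close> by simp
  qed
qed

lemma one_mem_bigblocks: "odd n2 \<Longrightarrow> i \<in> bigblocks n1 n2 n3 \<Longrightarrow> 1 \<in> bigblocks n1 n2 n3"
proof -
  assume "odd n2" "i \<in> bigblocks n1 n2 n3"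
  then have "q = fpar n2" "1 \<le> 2 * r" "2 * r \<le> n1"
    using long_blockD[OF \<open>odd n2\<close>, of i] by (auto simp: bigblocks_def)
  then have "l 1 = fpar n2 + 1" by (simp add: ell_few_long)
  then show ?thesis using n1_pos by (simp add: bigblocks_def)
qed

lemma two_le_ell_1: "2 \<le> l 1"
proof (cases "2 \<le> q")
  case True
  then show ?thesis using ell_cases[of 1] by auto
next
  case False
  have "n1 < n3" using lower_bound three_le_n1 by simp
  then have "0 < r" using False q_pos n3_eq by (cases "r = 0") auto
  then have "l 1 = q + 1"
    by (cases "2 * r \<le> n1") (use ell_many_long[of 1] in \<open>auto simp: ell_few_long\<close>)
  then show ?thesis using q_pos by simp
qed

lemma even_construction:
  assumes "even n2"
  shows "basic_landmark_system n1 n2 n3 (landmarks (yL_even n2) (yR_even n2))"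
proof -
  define h where "h = n2 div 2"
  have n2: "n2 = 2 * h" using assms h_def by simp
  have "yL_even n2 = cyclic_label {} h" "yR_even n2 = (\<lambda>c. h + cyclic_label {} h c)"
    by (simp_all add: fun_eq_iff yL_even_def yR_even_def cyclic_label_def rank_out_empty h_def)
  moreover have "basic_landmark_system n1 (2 * h) n3
      (landmarks (cyclic_label {} h) (\<lambda>c. h + cyclic_label {} h c))"
  proof (rule basic_landmark_system_even)
    show "2 \<le> n1" using three_le_n1 by simp
    show "0 < h" using three_le_n2 n2 by simp
    show "l i \<le> h" for i using ell_le_half_even[OF assms] h_def by simp
    show "2 * h \<le> n3" using lower_bound n2 by simp
  qed
  ultimately show ?thesis using n2 by simp
qed

lemma odd_construction_many:
  assumes "odd n2" and "2 \<le> kpar n1 n2 n3"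
  shows "basic_landmark_system n1 n2 n3 (landmarks (yL_odd n1 n2 n3) (yR_odd n1 n2 n3))"
proof -
  let ?I = "bigblocks n1 n2 n3" and ?f = "fpar n2"
  have n2: "2 * ?f + 1 = n2" using odd_n2_eq[OF assms(1)] .
  have Sset: "Sset n1 n2 n3 = S ?I" using assms(2) by (simp add: Sset_def sblk_def)
  have yL: "yL_odd n1 n2 n3 = (\<lambda>c. if c \<in> S ?I \<union> {} then n2 else cyclic_label (S ?I) ?f c)"
    by (simp add: fun_eq_iff yL_odd_def Sset cyclic_label_def)
  have yR: "yR_odd n1 n2 n3 = (\<lambda>c. if c \<in> S' ?I then n2 else ?f + cyclic_label (S' ?I) ?f c)"
    by (simp add: fun_eq_iff yR_odd_def Let_def Sset image_image cyclic_label_def)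
  have "basic_landmark_system n1 (2 * ?f + 1) n3
      (landmarks (\<lambda>c. if c \<in> S ?I \<union> {} then 2 * ?f + 1 else cyclic_label (S ?I) ?f c) (right_label ?I ?f))"
  proof (rule basic_landmark_system_odd)
    have "?I \<noteq> {}" using assms(2) by (auto simp: kpar_def)
    then obtain i where "i \<in> ?I" by blast
    then have "q = ?f" using long_blockD[OF assms(1)] by (auto simp: bigblocks_def)
    then show "3 * ?f + card ?I \<le> n3"
      using card_bigblocks_le[OF assms(1)] n3_eq three_le_n1 mult_le_mono1[of 3 n1 q] by linarith
    show "?I \<noteq> {}" by fact
    show "0 < ?f" using three_le_n2 n2 by simp
    show "2 \<le> l i" if "i \<in> ?I" for i using that \<open>0 < ?f\<close> by (auto simp: bigblocks_def)
    show "l i \<le> ?f \<or> i \<in> ?I \<and> l i \<le> ?f + 1" if "i \<in> {1..n1}" for i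
      using that ell_le_odd[OF assms(1), of i] by (auto simp: bigblocks_def)
  qed (use three_le_n1 bigblocks_next_block_disjoint[OF assms(1)] in \<open>auto simp: bigblocks_def\<close>)
  then show ?thesis unfolding yL yR by (simp only: n2)
qed

lemma odd_construction_few:
  assumes "odd n2" and "\<not> 2 \<le> kpar n1 n2 n3" and c: "c \<in> {1..n3}" and "B c \<notin> {1, 2}"
  shows "basic_landmark_system n1 n2 n3 (landmarks ((yL_odd n1 n2 n3)(c := n2)) (yR_odd n1 n2 n3))"
proof -
  let ?f = "fpar n2"
  have n2: "2 * ?f + 1 = n2" using odd_n2_eq[OF assms(1)] .
  have Sset: "Sset n1 n2 n3 = S {1}" using assms(2) by (simp add: Sset_def Lsum_def)
  have yL: "(yL_odd n1 n2 n3)(c := n2) = (\<lambda>x. if x \<in> S {1} \<union> {c} then n2 else cyclic_label (S {1}) ?f x)"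
    by (simp add: fun_eq_iff yL_odd_def Sset cyclic_label_def)
  have yR: "yR_odd n1 n2 n3 = (\<lambda>x. if x \<in> S' {1} then n2 else ?f + cyclic_label (S' {1}) ?f x)"
    by (simp add: fun_eq_iff yR_odd_def Let_def Sset image_image cyclic_label_def)
  have "basic_landmark_system n1 (2 * ?f + 1) n3
      (landmarks (\<lambda>x. if x \<in> S {1} \<union> {c} then 2 * ?f + 1 else cyclic_label (S {1}) ?f x) (right_label {1} ?f))"
  proof (rule basic_landmark_system_odd)
    show "0 < ?f" using three_le_n2 n2 by simp
    have "3 * n2 \<le> 2 * n3" using lower_bound by (simp add: max_def split: if_splits)
    then show "3 * ?f + card {1::nat} \<le> n3" using n2 by simp
    show "l i \<le> ?f \<or> i \<in> {1} \<and> l i \<le> ?f + 1" if "i \<in> {1..n1}" for i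
    proof (cases "?f < l i")
      case True
      then have "i \<in> bigblocks n1 n2 n3" using that by (simp add: bigblocks_def)
      moreover from this have "1 \<in> bigblocks n1 n2 n3" by (rule one_mem_bigblocks[OF assms(1)])
      moreover have "card (bigblocks n1 n2 n3) \<le> 1" using assms(2) by (simp add: kpar_def)
      ultimately have "i = 1" using card_le_Suc0_iff_eq[of "bigblocks n1 n2 n3"] by (auto simp: bigblocks_def)
      then show ?thesis using ell_le_odd[OF assms(1)] by simp
    qed simp
    show "2 \<le> l i" if "i \<in> {1}" for i using that two_le_ell_1 by simp
  qed (use three_le_n1 c assms(4) in auto)
  then show ?thesis unfolding yL yR by (simp only: n2)
qed

end

theorem mainTheorem7:
  fixes n1 n2 n3 :: nat and W :: "vert set"
  assumes "3 \<le> n1" and "3 \<le> n2" and "n1 \<le> n3" and "n2 \<le> n3"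
    and "3 * max n1 n2 \<le> 2 * n3" and "2 * n3 \<le> n1 * n2"
    and "middle_cone n1 n2 n3 W"
  shows "basic_landmark_system n1 n2 n3 W"
proof -
  interpret middle_cone_params n1 n3 n2
    using assms(1-6) by unfold_locales auto
  show ?thesis
  proof (cases "even n2")
    case True
    then show ?thesis using assms(7) even_construction by (simp add: middle_cone_def)
  next
    case odd: False
    show ?thesis
    proof (cases "2 \<le> kpar n1 n2 n3")
      case True
      then show ?thesis using assms(7) odd odd_construction_many by (simp add: middle_cone_def)
    next
      case False
      \<comment> \<open>the requirement that the modified landmark has second coordinate 1 is not needed\<close>
      then obtain c where "c \<in> {1..n3}" "blk n1 n3 c \<notin> {1, 2, n1}"
        "W = landmarks ((yL_odd n1 n2 n3)(c := n2)) (yR_odd n1 n2 n3)"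
        using assms(7) odd by (auto simp: middle_cone_def)
      then show ?thesis using odd_construction_few[OF odd False] by simp
    qed
  qed
qed

end
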